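(* Let $\mathbf{v}_1,\ldots,\mathbf{v}_k$ be orthogonal unit vectors in $\mathbb{R}^k$, let $F:\mathbb{R}^{kn}\to\mathbb{R}$ be \[ F(\mathbf{w}_1,\ldots,\mathbf{w}_n)=\mathbb{E}_{\mathbf{x}\sim\mathcal{N}(\mathbf{0},I_k)}\left[\frac{1}{2}\left(\sum_{i=1}^{n}[\mathbf{w}_i^\top\mathbf{x}]_+-\sum_{i=1}^{k}[\mathbf{v}_i^\top\mathbf{x}]_+\right)^2\right], \] and let $\mathbf{w}\in\mathbb{R}^{kn}$ and $\alpha>0$ be such that $F$ is thrice differentiable on an open set containing the closed ball of radius $\alpha$ centered at $\mathbf{w}$. For a unit vector $\mathbf{u}\in\mathbb{R}^{kn}$ and $t\in(0,\alpha]$, let $R_{\mathbf{w},\mathbf{u},t}$ be the Lagrange remainder, i.e. the number with \[ F(\mathbf{w}+t\mathbf{u})=F(\mathbf{w})+t\nabla F(\mathbf{w})^\top\mathbf{u}+\tfrac{1}{2}t^2\mathbf{u}^\top\nabla^2F(\mathbf{w})\mathbf{u}+\tfrac{1}{6}t^3R_{\mathbf{w},\mathbf{u},t} \] (by Taylor's theorem $R_{\mathbf{w},\mathbf{u},t}=\sum_{i_1,i_2,i_3}\frac{\partial^3 F}{\partial w_{i_1}\partial w_{i_2}\partial w_{i_3}}(\mathbf{w}+\xi\mathbf{u})u_{i_1}u_{i_2}u_{i_3}$ for some $\xi\in(0,t)$). Assume that for some $\epsilon,B>0$ we have $\|\nabla F(\mathbf{w})\|\le\epsilon$ and $\sup_{t\in(0,\alpha],\,\|\mathbf{u}\|=1}|R_{\mathbf{w},\mathbf{u},t}|\le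 B$. Let $\lambda_{\min}>0$ be the smallest eigenvalue of $\nabla^2F(\mathbf{w})$ (assumed positive), and let \[ r=\frac{3\lambda_{\min}-\sqrt{9\lambda_{\min}^2-25B\epsilon}}{2B}. \] If $9\lambda_{\min}^2-25B\epsilon\ge 0$ and $r<\alpha$, then $F$ has a local minimum at distance at most $r$ from $\mathbf{w}$.
   Context: $[z]_+=\max\{0,z\}$. A local minimum of $F$ is a point $\mathbf{w}^*$ with $F(\mathbf{w}^* )\le F(\mathbf{w}')$ for all $\mathbf{w}'$ in some open neighborhood of $\mathbf{w}^*$. Norms are Euclidean. *)

theory Defs
  imports "HOL-Probability.Probability"
begin

definition relu :: "real \<Rightarrow> real" where
  "relu z = max 0 z"

definition gauss_density :: "real^'k \<Rightarrow> real" where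
  "gauss_density x = (\<Prod>i\<in>UNIV. std_normal_density (x $ i))"

definition gauss_expect :: "(real^'k \<Rightarrow> real) \<Rightarrow> real" where
  "gauss_expect f = (\<integral>x. f x * gauss_density x \<partial>lborel)"

definition relu_loss :: "('k \<Rightarrow> real^'k) \<Rightarrow> real^'k^'n \<Rightarrow> real" where
  "relu_loss v w = gauss_expect (\<lambda>x.
      (1/2) * ((\<Sum>i\<in>UNIV. relu ((w $ i) \<bullet> x)) - (\<Sum>i\<in>UNIV. relu (v i \<bullet> x)))\<^sup>2)"

definition local_min_at :: "('a::topological_space \<Rightarrow> real) \<Rightarrow> 'a \<Rightarrow> bool" where
  "local_min_at F w \<longleftrightarrow> (\<exists>S. open S \<and> w \<in> S \<and> (\<forall>w'\<in>S. F w \<le> F w'))"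

definition lagrange_rem ::
  "('a::real_inner \<Rightarrow> real) \<Rightarrow> 'a \<Rightarrow> 'a \<Rightarrow> ('a \<Rightarrow> 'a) \<Rightarrow> 'a \<Rightarrow> real \<Rightarrow> real" where
  "lagrange_rem F w g H u t =
     6 / t^3 * (F (w + t *\<^sub>R u) - F w - t * (g \<bullet> u) - t\<^sup>2 / 2 * (u \<bullet> H u))"

definition is_eigenvalue :: "('a::real_vector \<Rightarrow> 'a) \<Rightarrow> real \<Rightarrow> bool" where
  "is_eigenvalue A c \<longleftrightarrow> (\<exists>u. u \<noteq> 0 \<and> A u = c *\<^sub>R u)"

end

theory Submission
  imports Defs
begin

text \<open>The third derivative makes the Hessian continuous at \<open>w\<close>, hence symmetric (Schwarz), so its
  least eigenvalue \<open>lmin\<close> bounds the quadratic form from below. On the sphere of radius \<open>r\<close>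
  around \<open>w\<close>, the Taylor expansion with the remainder bound gives
  \<open>F (w + r u) - F w \<ge> r\<^sup>2 lmin / 2 - r \<epsilon> - B r\<^sup>3 / 6 > 0\<close> for the chosen \<open>r\<close>. So the minimum
  of \<open>F\<close> over the closed ball is attained inside the open ball and is a local minimum.\<close>

lemma has_real_derivative_along_line:
  fixes f :: "'a::real_normed_vector \<Rightarrow> real"
  assumes "(f has_derivative f') (at (p + t *\<^sub>R d))"
  shows "((\<lambda>t. f (p + t *\<^sub>R d)) has_real_derivative f' d) (at t)"
proof -
  have "((\<lambda>t. p + t *\<^sub>R d) has_derivative (\<lambda>t. t *\<^sub>R d)) (at t)"
    by (auto intro!: derivative_eq_intros)
  from has_derivative_compose[OF this assms] show ?thesis
    by (rule has_derivative_imp_has_field_derivative)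
       (simp add: linear_cmul[OF has_derivative_linear[OF assms]])
qed

lemma second_difference_mean_value:
  fixes F :: "'a::real_inner \<Rightarrow> real" and G :: "'a \<Rightarrow> 'a" and H :: "'a \<Rightarrow> ('a \<Rightarrow>\<^sub>L 'a)"
  assumes grad: "\<And>x. x \<in> U \<Longrightarrow> (F has_derivative (\<lambda>h. G x \<bullet> h)) (at x)"
    and hess: "\<And>x. x \<in> U \<Longrightarrow> (G has_derivative blinfun_apply (H x)) (at x)"
    and sub: "cball w \<alpha> \<subseteq> U" and s: "s > 0" and s_small: "s * (norm a + norm b) \<le> \<alpha>"
  shows "\<exists>p. dist p w \<le> s * (norm a + norm b) \<and>
    F (w + s *\<^sub>R a + s *\<^sub>R b) - F (w + s *\<^sub>R a) - F (w + s *\<^sub>R b) + F w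
      = s\<^sup>2 * (blinfun_apply (H p) a \<bullet> b)"
proof -
  have dist_le: "dist (w + \<sigma> *\<^sub>R a + \<tau> *\<^sub>R b) w \<le> s * (norm a + norm b)"
    if "0 \<le> \<sigma>" "\<sigma> \<le> s" "0 \<le> \<tau>" "\<tau> \<le> s" for \<sigma> \<tau>
  proof -
    have "dist (w + \<sigma> *\<^sub>R a + \<tau> *\<^sub>R b) w \<le> \<sigma> * norm a + \<tau> * norm b"
      using norm_triangle_ineq[of "\<sigma> *\<^sub>R a" "\<tau> *\<^sub>R b"] that by (simp add: dist_norm)
    also have "\<dots> \<le> s * norm a + s * norm b"
      by (intro add_mono mult_right_mono) (use that in auto)
    finally show ?thesis by (simp add: algebra_simps)
  qed
  have inU: "w + \<sigma> *\<^sub>R a + \<tau> *\<^sub>R b \<in> U"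
    if "0 \<le> \<sigma>" "\<sigma> \<le> s" "0 \<le> \<tau>" "\<tau> \<le> s" for \<sigma> \<tau>
    using dist_le[OF that] s_small sub by (auto simp: dist_commute)
  define g where "g \<tau> = F (w + s *\<^sub>R a + \<tau> *\<^sub>R b) - F (w + \<tau> *\<^sub>R b)" for \<tau>
  have g_deriv: "(g has_real_derivative G (w + s *\<^sub>R a + \<tau> *\<^sub>R b) \<bullet> b - G (w + \<tau> *\<^sub>R b) \<bullet> b) (at \<tau>)"
    if "0 \<le> \<tau>" "\<tau> \<le> s" for \<tau>
    unfolding g_def
    by (intro DERIV_diff has_real_derivative_along_line grad)
       (use inU[of s \<tau>] inU[of 0 \<tau>] that s in auto)
  obtain \<tau> where \<tau>: "0 < \<tau>" "\<tau> < s" and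
    g_mvt: "g s - g 0 = (s - 0) * (G (w + s *\<^sub>R a + \<tau> *\<^sub>R b) \<bullet> b - G (w + \<tau> *\<^sub>R b) \<bullet> b)"
    using MVT2[OF s, of g "\<lambda>\<tau>. G (w + s *\<^sub>R a + \<tau> *\<^sub>R b) \<bullet> b - G (w + \<tau> *\<^sub>R b) \<bullet> b"] g_deriv
    by auto
  define h where "h \<sigma> = G ((w + \<tau> *\<^sub>R b) + \<sigma> *\<^sub>R a) \<bullet> b" for \<sigma>
  have h_deriv: "(h has_real_derivative blinfun_apply (H ((w + \<tau> *\<^sub>R b) + \<sigma> *\<^sub>R a)) a \<bullet> b) (at \<sigma>)"
    if "0 \<le> \<sigma>" "\<sigma> \<le> s" for \<sigma>
    unfolding h_def
    by (intro has_real_derivative_along_line has_derivative_inner_left hess)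
       (use inU[of \<sigma> \<tau>] that \<tau> in \<open>auto simp: algebra_simps\<close>)
  obtain \<sigma> where \<sigma>: "0 < \<sigma>" "\<sigma> < s" and
    h_mvt: "h s - h 0 = (s - 0) * (blinfun_apply (H ((w + \<tau> *\<^sub>R b) + \<sigma> *\<^sub>R a)) a \<bullet> b)"
    using MVT2[OF s, of h "\<lambda>\<sigma>. blinfun_apply (H ((w + \<tau> *\<^sub>R b) + \<sigma> *\<^sub>R a)) a \<bullet> b"] h_deriv
    by auto
  show ?thesis
  proof (intro exI conjI)
    show "dist ((w + \<tau> *\<^sub>R b) + \<sigma> *\<^sub>R a) w \<le> s * (norm a + norm b)"
      using dist_le[of \<sigma> \<tau>] \<sigma> \<tau> by (simp add: algebra_simps)
    show "F (w + s *\<^sub>R a + s *\<^sub>R b) - F (w + s *\<^sub>R a) - F (w + s *\<^sub>R b) + F w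
      = s\<^sup>2 * (blinfun_apply (H ((w + \<tau> *\<^sub>R b) + \<sigma> *\<^sub>R a)) a \<bullet> b)"
      using g_mvt h_mvt unfolding g_def h_def by (simp add: algebra_simps power2_eq_square)
  qed
qed

lemma hessian_mixed_terms_agree_nearby:
  fixes F :: "'a::real_inner \<Rightarrow> real" and G :: "'a \<Rightarrow> 'a" and H :: "'a \<Rightarrow> ('a \<Rightarrow>\<^sub>L 'a)"
  assumes grad: "\<And>x. x \<in> U \<Longrightarrow> (F has_derivative (\<lambda>h. G x \<bullet> h)) (at x)"
    and hess: "\<And>x. x \<in> U \<Longrightarrow> (G has_derivative blinfun_apply (H x)) (at x)"
    and sub: "cball w \<alpha> \<subseteq> U" and \<alpha>: "\<alpha> > 0" and \<delta>: "\<delta> > 0"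
  shows "\<exists>p q. dist p w < \<delta> \<and> dist q w < \<delta> \<and>
    blinfun_apply (H p) a \<bullet> b = blinfun_apply (H q) b \<bullet> a"
proof -
  define N where "N = norm a + norm b"
  define s where "s = min \<alpha> \<delta> / (2 * (N + 1))"
  have N: "N \<ge> 0" unfolding N_def by simp
  have s: "s > 0" unfolding s_def using \<alpha> \<delta> N by auto
  have "s * N = min \<alpha> \<delta> / 2 * (N / (N + 1))" unfolding s_def by (simp add: field_simps)
  also have "\<dots> \<le> min \<alpha> \<delta> / 2"
    using N \<alpha> \<delta> by (intro mult_left_le) auto
  finally have sN: "s * N \<le> \<alpha>" "s * N < \<delta>" using \<alpha> \<delta> by auto
  obtain p where p: "dist p w \<le> s * N" and p_eq:
    "F (w + s *\<^sub>R a + s *\<^sub>R b) - F (w + s *\<^sub>R a) - F (w + s *\<^sub>R b) + F w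
      = s\<^sup>2 * (blinfun_apply (H p) a \<bullet> b)"
    using second_difference_mean_value[OF grad hess sub s, of a b] sN unfolding N_def by blast
  obtain q where q: "dist q w \<le> s * N" and q_eq:
    "F (w + s *\<^sub>R b + s *\<^sub>R a) - F (w + s *\<^sub>R b) - F (w + s *\<^sub>R a) + F w
      = s\<^sup>2 * (blinfun_apply (H q) b \<bullet> a)"
    using second_difference_mean_value[OF grad hess sub s, of b a] sN
    unfolding N_def by (auto simp: add.commute)
  have "s\<^sup>2 * (blinfun_apply (H p) a \<bullet> b) = s\<^sup>2 * (blinfun_apply (H q) b \<bullet> a)"
    using p_eq q_eq by (simp add: algebra_simps)
  with s p q sN show ?thesis by (intro exI[of _ p] exI[of _ q]) auto
qed

lemma blinfun_inner_diff_le: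
  fixes L M :: "'a::real_inner \<Rightarrow>\<^sub>L 'a"
  shows "\<bar>blinfun_apply L a \<bullet> b - blinfun_apply M a \<bullet> b\<bar> \<le> dist L M * norm a * norm b"
proof -
  have "\<bar>blinfun_apply L a \<bullet> b - blinfun_apply M a \<bullet> b\<bar> = \<bar>blinfun_apply (L - M) a \<bullet> b\<bar>"
    by (simp add: blinfun.diff_left inner_diff_left)
  also have "\<dots> \<le> norm (blinfun_apply (L - M) a) * norm b" by (rule Cauchy_Schwarz_ineq2)
  also have "\<dots> \<le> norm (L - M) * norm a * norm b"
    by (intro mult_right_mono norm_blinfun) auto
  finally show ?thesis by (simp add: dist_norm)
qed

text \<open>Schwarz's theorem: both mixed second differences are Hessian values at nearby points.\<close>

lemma hessian_symmetric_if_continuous: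
  fixes F :: "'a::real_inner \<Rightarrow> real" and G :: "'a \<Rightarrow> 'a" and H :: "'a \<Rightarrow> ('a \<Rightarrow>\<^sub>L 'a)"
  assumes grad: "\<And>x. x \<in> U \<Longrightarrow> (F has_derivative (\<lambda>h. G x \<bullet> h)) (at x)"
    and hess: "\<And>x. x \<in> U \<Longrightarrow> (G has_derivative blinfun_apply (H x)) (at x)"
    and sub: "cball w \<alpha> \<subseteq> U" and \<alpha>: "\<alpha> > 0" and cont: "isCont H w"
  shows "blinfun_apply (H w) a \<bullet> b = blinfun_apply (H w) b \<bullet> a"
proof -
  define K where "K = 2 * (norm a * norm b + 1)"
  have K: "K > 0" unfolding K_def by (simp add: add_nonneg_pos)
  have "\<bar>blinfun_apply (H w) a \<bullet> b - blinfun_apply (H w) b \<bullet> a\<bar> \<le> 0 + e" if e: "e > 0" for e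
  proof -
    obtain \<delta> where \<delta>: "\<delta> > 0" and H_close: "\<And>x. dist x w < \<delta> \<Longrightarrow> dist (H x) (H w) < e / K"
      using cont e K unfolding continuous_at_eps_delta by (meson divide_pos_pos)
    obtain p q where pq: "dist p w < \<delta>" "dist q w < \<delta>"
      and mixed: "blinfun_apply (H p) a \<bullet> b = blinfun_apply (H q) b \<bullet> a"
      using hessian_mixed_terms_agree_nearby[OF grad hess sub \<alpha> \<delta>] by blast
    have close: "\<bar>blinfun_apply (H x) c \<bullet> d - blinfun_apply (H w) c \<bullet> d\<bar> \<le> e / K * (norm c * norm d)"
      if "dist x w < \<delta>" for x c d
    proof -
      have "\<bar>blinfun_apply (H x) c \<bullet> d - blinfun_apply (H w) c \<bullet> d\<bar> \<le> dist (H x) (H w) * (norm c * norm d)"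
        using blinfun_inner_diff_le[of "H x" c d "H w"] by (simp add: mult.assoc)
      also have "\<dots> \<le> e / K * (norm c * norm d)"
        using H_close[OF that] by (intro mult_right_mono) auto
      finally show ?thesis .
    qed
    have "2 * (e / K * (norm a * norm b)) \<le> e"
      using e K unfolding K_def by (simp add: field_simps)
    with close[OF pq(1), of a b] close[OF pq(2), of b a] mixed show ?thesis
      by (simp add: mult.commute[of "norm b"])
  qed
  then have "\<bar>blinfun_apply (H w) a \<bullet> b - blinfun_apply (H w) b \<bullet> a\<bar> \<le> 0"
    by (rule field_le_epsilon)
  then show ?thesis by simp
qed

lemma linear_coeff_zero_if_quadratic_nonneg:
  fixes c d :: real
  assumes nonneg: "\<And>s. 0 \<le> 2 * s * c + s\<^sup>2 * d"
  shows "c = 0"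
proof -
  define t where "t = 1 / (\<bar>d\<bar> + 1)"
  have t: "t > 0" "t * d < 2"
    unfolding t_def by (auto simp: field_simps)
  have "0 \<le> 2 * (- t * c) * c + (- t * c)\<^sup>2 * d" by (rule nonneg)
  also have "\<dots> = t * c\<^sup>2 * (t * d - 2)" by (simp add: algebra_simps power2_eq_square)
  finally have "0 \<le> t * c\<^sup>2 * (t * d - 2)" .
  with t have "c\<^sup>2 \<le> 0" by (smt (verit) mult_pos_neg zero_less_mult_iff zero_le_power2)
  then show ?thesis by simp
qed

text \<open>First-order optimality of the Rayleigh quotient in every direction \<open>h\<close>.\<close>

lemma rayleigh_minimizer_is_eigenvector:
  fixes L :: "'a::real_inner \<Rightarrow>\<^sub>L 'a"
  assumes sym: "\<And>a b. blinfun_apply L a \<bullet> b = blinfun_apply L b \<bullet> a"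
    and lower: "\<And>y. m * (norm y)\<^sup>2 \<le> y \<bullet> blinfun_apply L y"
    and attained: "u \<bullet> blinfun_apply L u = m * (norm u)\<^sup>2"
  shows "blinfun_apply L u = m *\<^sub>R u"
proof -
  let ?Q = "\<lambda>y. y \<bullet> blinfun_apply L y - m * (norm y)\<^sup>2"
  have expand: "?Q (u + s *\<^sub>R h) = ?Q u + 2 * s * (h \<bullet> (blinfun_apply L u - m *\<^sub>R u)) + s\<^sup>2 * ?Q h"
    for s h
  proof -
    have "u \<bullet> blinfun_apply L h = h \<bullet> blinfun_apply L u"
      using sym[of h u] by (simp add: inner_commute)
    moreover have "(norm (u + s *\<^sub>R h))\<^sup>2 = (norm u)\<^sup>2 + 2 * s * (h \<bullet> u) + s\<^sup>2 * (norm h)\<^sup>2"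
      unfolding power2_norm_eq_inner
      by (simp add: inner_add_left inner_add_right inner_commute[of u h] algebra_simps power2_eq_square)
    ultimately show ?thesis
      by (simp add: power2_norm_eq_inner blinfun.add_right blinfun.scaleR_right inner_add_left
          inner_add_right inner_diff_right algebra_simps power2_eq_square inner_commute[of u h])
  qed
  have "h \<bullet> (blinfun_apply L u - m *\<^sub>R u) = 0" for h
  proof (rule linear_coeff_zero_if_quadratic_nonneg)
    fix s
    show "0 \<le> 2 * s * (h \<bullet> (blinfun_apply L u - m *\<^sub>R u)) + s\<^sup>2 * ?Q h"
      using lower[of "u + s *\<^sub>R h"] expand[of s h] attained by simp
  qed
  from this[of "blinfun_apply L u - m *\<^sub>R u"] show ?thesis by simp
qed

lemma quadratic_form_attains_min_on_sphere:
  fixes L :: "'a::euclidean_space \<Rightarrow>\<^sub>L 'a"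
  obtains u where "norm u = 1" and "\<And>y. (u \<bullet> blinfun_apply L u) * (norm y)\<^sup>2 \<le> y \<bullet> blinfun_apply L y"
proof -
  let ?Q = "\<lambda>y. y \<bullet> blinfun_apply L y"
  have "continuous_on (sphere 0 1) ?Q" by (intro continuous_intros)
  from continuous_attains_inf[OF compact_sphere _ this]
  obtain u where u: "norm u = 1" and min: "\<And>y. norm y = 1 \<Longrightarrow> ?Q u \<le> ?Q y"
    by auto
  have "?Q u * (norm y)\<^sup>2 \<le> ?Q y" for y
  proof (cases "y = 0")
    case False
    have "?Q u \<le> ?Q ((1 / norm y) *\<^sub>R y)" using False by (intro min) simp
    also have "\<dots> = ?Q y / (norm y)\<^sup>2"
      by (simp add: blinfun.scaleR_right power2_eq_square)
    finally show ?thesis using False by (simp add: field_simps)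
  qed simp
  with u show ?thesis by (rule that)
qed

lemma least_eigenvalue_le_quadratic_form:
  fixes L :: "'a::euclidean_space \<Rightarrow>\<^sub>L 'a"
  assumes sym: "\<And>a b. blinfun_apply L a \<bullet> b = blinfun_apply L b \<bullet> a"
    and least: "\<And>\<mu>. is_eigenvalue (blinfun_apply L) \<mu> \<Longrightarrow> lmin \<le> \<mu>"
  shows "lmin * (norm x)\<^sup>2 \<le> x \<bullet> blinfun_apply L x"
proof -
  obtain u where u: "norm u = 1"
    and lower: "\<And>y. (u \<bullet> blinfun_apply L u) * (norm y)\<^sup>2 \<le> y \<bullet> blinfun_apply L y"
    using quadratic_form_attains_min_on_sphere by blast
  have "blinfun_apply L u = (u \<bullet> blinfun_apply L u) *\<^sub>R u"
    using rayleigh_minimizer_is_eigenvector[OF sym lower] u by simp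
  with u have "lmin \<le> u \<bullet> blinfun_apply L u"
    by (intro least) (auto simp: is_eigenvalue_def intro!: exI[of _ u])
  then have "lmin * (norm x)\<^sup>2 \<le> (u \<bullet> blinfun_apply L u) * (norm x)\<^sup>2"
    by (simp add: mult_right_mono)
  also have "\<dots> \<le> x \<bullet> blinfun_apply L x" by (rule lower)
  finally show ?thesis .
qed

text \<open>\<open>r\<close> is the smaller root of \<open>B r\<^sup>2 - 3 lmin r + 25 \<epsilon> / 4\<close>, so that
  \<open>B r\<^sup>2 - 3 lmin r + 6 \<epsilon> = - \<epsilon> / 4\<close>.\<close>

lemma radius_quadratic_negative:
  fixes B \<epsilon> lmin r :: real
  assumes B: "B > 0" and \<epsilon>: "\<epsilon> > 0" and lmin: "lmin > 0"
    and disc: "9 * lmin\<^sup>2 - 25 * B * \<epsilon> \<ge> 0"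
    and r_def: "r = (3 * lmin - sqrt (9 * lmin\<^sup>2 - 25 * B * \<epsilon>)) / (2 * B)"
  shows "r > 0" and "B * r\<^sup>2 - 3 * lmin * r + 6 * \<epsilon> < 0"
proof -
  define S where "S = sqrt (9 * lmin\<^sup>2 - 25 * B * \<epsilon>)"
  have S: "S \<ge> 0" "S\<^sup>2 = 9 * lmin\<^sup>2 - 25 * B * \<epsilon>" unfolding S_def using disc by simp_all
  with B \<epsilon> have "S\<^sup>2 < (3 * lmin)\<^sup>2" by (simp add: power2_eq_square)
  then have "S < 3 * lmin" by (rule power_less_imp_less_base) (use lmin in simp)
  then show "r > 0" unfolding r_def S_def[symmetric] using B by simp
  have r2: "2 * B * r = 3 * lmin - S" unfolding r_def S_def using B by simp
  have "4 * B * (B * r\<^sup>2 - 3 * lmin * r + 6 * \<epsilon>) = (2 * B * r)\<^sup>2 - 6 * lmin * (2 * B * r) + 24 * B * \<epsilon>"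
    by (simp add: algebra_simps power2_eq_square)
  also have "\<dots> = - B * \<epsilon>" unfolding r2 using S by (simp add: algebra_simps power2_eq_square)
  finally have "4 * B * (B * r\<^sup>2 - 3 * lmin * r + 6 * \<epsilon>) < 0" using B \<epsilon> by simp
  then show "B * r\<^sup>2 - 3 * lmin * r + 6 * \<epsilon> < 0" using B by (simp add: mult_less_0_iff)
qed

lemma taylor_increase_on_sphere:
  fixes F :: "'a::real_inner \<Rightarrow> real"
  assumes u: "norm u = 1" and r: "r > 0"
    and rem: "\<bar>lagrange_rem F w g L u r\<bar> \<le> B"
    and grad_small: "norm g \<le> \<epsilon>" and curv: "lmin \<le> u \<bullet> L u"
    and neg: "B * r\<^sup>2 - 3 * lmin * r + 6 * \<epsilon> < 0"
  shows "F w < F (w + r *\<^sub>R u)"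
proof -
  define R where "R = F (w + r *\<^sub>R u) - F w - r * (g \<bullet> u) - r\<^sup>2 / 2 * (u \<bullet> L u)"
  have "lagrange_rem F w g L u r = 6 / r ^ 3 * R" unfolding lagrange_rem_def R_def ..
  with rem r have R: "- B * r ^ 3 / 6 \<le> R" by (simp add: field_simps abs_le_iff)
  have "- \<epsilon> \<le> g \<bullet> u" using Cauchy_Schwarz_ineq2[of g u] grad_small u by simp
  have "0 < - (r / 6) * (B * r\<^sup>2 - 3 * lmin * r + 6 * \<epsilon>)" using neg r by (simp add: mult_pos_neg)
  also have "\<dots> = - B * r ^ 3 / 6 + r * (- \<epsilon>) + r\<^sup>2 / 2 * lmin"
    by (simp add: algebra_simps power2_eq_square power3_eq_cube)
  also have "\<dots> \<le> F (w + r *\<^sub>R u) - F w"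
  proof -
    have "r * (- \<epsilon>) \<le> r * (g \<bullet> u)" using \<open>- \<epsilon> \<le> g \<bullet> u\<close> r by (intro mult_left_mono) auto
    moreover have "r\<^sup>2 / 2 * lmin \<le> r\<^sup>2 / 2 * (u \<bullet> L u)" using curv by (simp add: mult_left_mono)
    ultimately show ?thesis using R unfolding R_def by linarith
  qed
  finally show ?thesis by simp
qed

lemma local_min_in_ball_if_greater_on_sphere:
  fixes F :: "'a::{real_normed_vector, heine_borel} \<Rightarrow> real"
  assumes r: "r > 0" and cont: "continuous_on (cball w r) F"
    and sphere: "\<And>u. norm u = 1 \<Longrightarrow> F w < F (w + r *\<^sub>R u)"
  shows "\<exists>w'. dist w' w < r \<and> local_min_at F w'"
proof -
  obtain w' where w': "w' \<in> cball w r" and min: "\<And>y. y \<in> cball w r \<Longrightarrow> F w' \<le> F y"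
    using continuous_attains_inf[OF compact_cball _ cont] r by fastforce
  have "dist w' w < r"
  proof (rule ccontr)
    assume "\<not> dist w' w < r"
    with w' have "norm (w' - w) = r" by (simp add: dist_norm norm_minus_commute)
    with r have "F w < F (w + r *\<^sub>R ((1 / r) *\<^sub>R (w' - w)))" by (intro sphere) simp
    also have "w + r *\<^sub>R ((1 / r) *\<^sub>R (w' - w)) = w'" using r by simp
    finally show False using min[of w] r by simp
  qed
  moreover have "local_min_at F w'"
    unfolding local_min_at_def using calculation min
    by (intro exI[of _ "ball w r"]) (auto simp: dist_commute)
  ultimately show ?thesis by blast
qed

theorem lemma1:
  fixes v :: "'k::finite \<Rightarrow> real^'k"
    and F :: "real^'k^'n::finite \<Rightarrow> real"
    and w :: "real^'k^'n"
    and U :: "(real^'k^'n) set"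
    and G :: "real^'k^'n \<Rightarrow> real^'k^'n"
    and H :: "real^'k^'n \<Rightarrow> ((real^'k^'n) \<Rightarrow>\<^sub>L (real^'k^'n))"
    and H3 :: "real^'k^'n \<Rightarrow> ((real^'k^'n) \<Rightarrow> ((real^'k^'n) \<Rightarrow>\<^sub>L (real^'k^'n)))"
    and \<alpha> \<epsilon> B lmin r :: real
  assumes v_unit: "\<And>i. norm (v i) = 1"
    and v_orth: "\<And>i j. i \<noteq> j \<Longrightarrow> v i \<bullet> v j = 0"
    and F_def: "F = relu_loss v"
    and \<alpha>_pos: "\<alpha> > 0"
    and U_open: "open U" and U_ball: "cball w \<alpha> \<subseteq> U"
    and grad: "\<And>x. x \<in> U \<Longrightarrow> (F has_derivative (\<lambda>h. G x \<bullet> h)) (at x)"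
    and hess: "\<And>x. x \<in> U \<Longrightarrow> (G has_derivative blinfun_apply (H x)) (at x)"
    and third: "\<And>x. x \<in> U \<Longrightarrow> (H has_derivative H3 x) (at x)"
    and \<epsilon>_pos: "\<epsilon> > 0" and B_pos: "B > 0"
    and grad_small: "norm (G w) \<le> \<epsilon>"
    and rem_bound: "\<And>u t. norm u = 1 \<Longrightarrow> t \<in> {0<..\<alpha>} \<Longrightarrow>
                       \<bar>lagrange_rem F w (G w) (blinfun_apply (H w)) u t\<bar> \<le> B"
    and lmin_eig: "is_eigenvalue (blinfun_apply (H w)) lmin"
    and lmin_least: "\<And>\<mu>. is_eigenvalue (blinfun_apply (H w)) \<mu> \<Longrightarrow> lmin \<le> \<mu>"
    and lmin_pos: "lmin > 0"
    and r_def: "r = (3 * lmin - sqrt (9 * lmin\<^sup>2 - 25 * B * \<epsilon>)) / (2 * B)"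
    and disc: "9 * lmin\<^sup>2 - 25 * B * \<epsilon> \<ge> 0"
    and r_lt: "r < \<alpha>"
  shows "\<exists>w'. dist w' w \<le> r \<and> local_min_at F w'"
proof -
  let ?L = "blinfun_apply (H w)"
  have "w \<in> U" using U_ball \<alpha>_pos by auto
  then have "isCont H w" using has_derivative_continuous[OF third] by blast
  then have sym: "\<And>a b. ?L a \<bullet> b = ?L b \<bullet> a"
    using hessian_symmetric_if_continuous[OF grad hess U_ball \<alpha>_pos] by blast
  have curv: "lmin \<le> u \<bullet> ?L u" if "norm u = 1" for u
    using least_eigenvalue_le_quadratic_form[OF sym lmin_least, of u] that by simp
  note r_pos = radius_quadratic_negative(1)[OF B_pos \<epsilon>_pos lmin_pos disc r_def]
    and neg = radius_quadratic_negative(2)[OF B_pos \<epsilon>_pos lmin_pos disc r_def]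
  have sub: "cball w r \<subseteq> U" using subset_cball[of r \<alpha> w] U_ball r_lt by auto
  have "continuous_on (cball w r) F"
    by (intro has_derivative_continuous_on, rule has_derivative_at_withinI, rule grad) (use sub in blast)
  moreover have "F w < F (w + r *\<^sub>R u)" if u: "norm u = 1" for u
  proof -
    have "\<bar>lagrange_rem F w (G w) ?L u r\<bar> \<le> B" using rem_bound[OF u] r_pos r_lt by simp
    from taylor_increase_on_sphere[OF u r_pos this grad_small curv[OF u] neg] show ?thesis .
  qed
  ultimately obtain w' where "dist w' w < r" "local_min_at F w'"
    using local_min_in_ball_if_greater_on_sphere[OF r_pos] by blast
  then show ?thesis by (intro exI[of _ w']) auto
qed

end
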